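(* Let $\mathcal S\subset\mathbb R^n$ be a finite positive spanning set of unit vectors. Then the optimization problem $$\text{(CMP)}\qquad \min_{v\in\mathbb R^n,\ \|v\|=1}\ \max_{d\in\mathcal S} d^\top v$$ is equivalent to the problem $$\text{(QP)}\qquad \max_{x\in\mathbb R^n}\ \|x\|^2\quad\text{subject to}\quad x\in P,\qquad P=\{x\in\mathbb R^n: x^\top d\le 1 \text{ for all } d\in\mathcal S\}.$$
   Context: A finite set $\mathcal S=\{d_1,\dots,d_k\}\subset\mathbb R^n$ is positive spanning if its positive span $\{\lambda_1d_1+\dots+\lambda_kd_k:\lambda_i\ge 0\}$ equals $\mathbb R^n$. $\|\cdot\|$ is the Euclidean norm. The equivalence shown in the paper is via the auxiliary problem (QCLP) $\min_{y\in\mathbb R^n,z\in\mathbb R} z$ subject to $y^\top d\le z$ for all $d\in\mathcal S$ and $\|y\|^2=1$ (which is equivalent to CMP): if $(y^*,z^* )$ is optimal for QCLP then $y^*/z^*$ is optimal for QP, and if $x^*$ is optimal for QP then $(x^*/\|x^*\|,1/\|x^*\|)$ is optimal for QCLP. *)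

theory Defs
  imports "HOL-Analysis.Analysis"
begin

definition pos_span :: "'a::real_vector set \<Rightarrow> 'a set" where
  "pos_span S = {x. \<exists>c. (\<forall>d\<in>S. 0 \<le> c d) \<and> x = (\<Sum>d\<in>S. c d *\<^sub>R d)}"

definition positive_spanning :: "'a::real_vector set \<Rightarrow> bool" where
  "positive_spanning S \<longleftrightarrow> pos_span S = UNIV"

definition cmp_obj :: "'a::real_inner set \<Rightarrow> 'a \<Rightarrow> real" where
  "cmp_obj S v = Max ((\<lambda>d. d \<bullet> v) ` S)"

definition cmp_optimal :: "'a::real_inner set \<Rightarrow> 'a \<Rightarrow> bool" where
  "cmp_optimal S v \<longleftrightarrow> norm v = 1 \<and> (\<forall>w. norm w = 1 \<longrightarrow> cmp_obj S v \<le> cmp_obj S w)"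

definition qp_feasible :: "'a::real_inner set \<Rightarrow> 'a set" where
  "qp_feasible S = {x. \<forall>d\<in>S. x \<bullet> d \<le> 1}"

definition qp_optimal :: "'a::real_inner set \<Rightarrow> 'a \<Rightarrow> bool" where
  "qp_optimal S x \<longleftrightarrow> x \<in> qp_feasible S \<and> (\<forall>y\<in>qp_feasible S. (norm y)\<^sup>2 \<le> (norm x)\<^sup>2)"

end

theory Submission
  imports Defs
begin

text \<open>
  Write \<open>f(v) = max\<^sub>d d \<bullet> v\<close>. Positive spanning makes \<open>f\<close> positive away from \<open>0\<close>, and
  \<open>f\<close> is positively homogeneous, while \<open>P = {x. f x \<le> 1}\<close>. Hence a nonzero \<open>x\<close> lies in
  \<open>P\<close> iff \<open>\<parallel>x\<parallel> \<le> 1 / f(x/\<parallel>x\<parallel>)\<close>, so maximising \<open>\<parallel>x\<parallel>\<close> over \<open>P\<close> is the same as minimising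
  \<open>f\<close> over the unit sphere, with optimal values \<open>1/m\<close> and \<open>m\<close>. The minimum \<open>m\<close> exists
  by continuity of \<open>f\<close> on the compact sphere.
\<close>

lemma positive_spanning_inner_pos:
  fixes S :: "'a::real_inner set"
  assumes "positive_spanning S" "v \<noteq> 0"
  shows "\<exists>d\<in>S. 0 < d \<bullet> v"
proof (rule ccontr)
  assume "\<not> (\<exists>d\<in>S. 0 < d \<bullet> v)"
  then have nonpos: "\<forall>d\<in>S. d \<bullet> v \<le> 0" by auto
  have "v \<in> pos_span S" using assms(1) by (simp add: positive_spanning_def)
  then obtain c where c: "\<forall>d\<in>S. 0 \<le> c d" and v: "v = (\<Sum>d\<in>S. c d *\<^sub>R d)"
    by (auto simp: pos_span_def)
  have "v \<bullet> v = (\<Sum>d\<in>S. c d * (d \<bullet> v))"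
    by (subst (1) v) (simp add: inner_sum_left)
  also have "\<dots> \<le> 0"
    using c nonpos by (intro sum_nonpos) (auto simp: mult_nonneg_nonpos)
  finally show False
    using assms(2) by (simp add: inner_gt_zero_iff[symmetric] del: inner_gt_zero_iff)
qed

lemma positive_spanning_nonempty:
  fixes S :: "'a::euclidean_space set"
  assumes "positive_spanning S"
  shows "S \<noteq> {}"
proof -
  obtain b :: 'a where "b \<in> Basis" using nonempty_Basis by blast
  then have "b \<noteq> 0" by auto
  then show ?thesis using positive_spanning_inner_pos[OF assms] by blast
qed

lemma inner_le_cmp_obj:
  assumes "finite S" "d \<in> S"
  shows "d \<bullet> v \<le> cmp_obj S v"
  using assms by (simp add: cmp_obj_def)

lemma cmp_obj_le_iff:
  assumes "finite S" "S \<noteq> {}"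
  shows "cmp_obj S v \<le> a \<longleftrightarrow> (\<forall>d\<in>S. d \<bullet> v \<le> a)"
  using assms by (simp add: cmp_obj_def)

lemma cmp_obj_scaleR:
  assumes "finite S" "S \<noteq> {}" "0 \<le> c"
  shows "cmp_obj S (c *\<^sub>R v) = c * cmp_obj S v"
proof -
  have "c * cmp_obj S v = Max ((*) c ` (\<lambda>d. d \<bullet> v) ` S)"
    unfolding cmp_obj_def using assms
    by (intro mono_Max_commute) (auto simp: mono_def mult_left_mono)
  then show ?thesis by (simp add: cmp_obj_def image_image)
qed

lemma cmp_obj_pos:
  fixes S :: "'a::real_inner set"
  assumes "finite S" "positive_spanning S" "v \<noteq> 0"
  shows "0 < cmp_obj S v"
  using positive_spanning_inner_pos[OF assms(2,3)] inner_le_cmp_obj[OF assms(1)]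
  by (meson less_le_trans)

lemma qp_feasible_iff_cmp_obj:
  assumes "finite S" "S \<noteq> {}"
  shows "x \<in> qp_feasible S \<longleftrightarrow> cmp_obj S x \<le> 1"
  using assms by (simp add: cmp_obj_le_iff qp_feasible_def inner_commute)

lemma continuous_on_cmp_obj:
  assumes "finite S"
  shows "continuous_on A (cmp_obj S)"
proof (cases "S = {}")
  case True
  then show ?thesis by (simp add: cmp_obj_def)
next
  case False
  from assms False show ?thesis
    unfolding cmp_obj_def
  proof (induction S rule: finite_ne_induct)
    case (singleton d)
    then show ?case by (simp add: continuous_intros)
  next
    case (insert d S)
    then have "(\<lambda>v. Max ((\<lambda>d. d \<bullet> v) ` insert d S)) = (\<lambda>v. max (d \<bullet> v) (Max ((\<lambda>d. d \<bullet> v) ` S)))"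
      by auto
    with insert show ?case by (auto intro!: continuous_intros)
  qed
qed

lemma cmp_optimal_exists:
  fixes S :: "'a::euclidean_space set"
  assumes "finite S"
  shows "\<exists>v. cmp_optimal S v"
proof -
  obtain b :: 'a where "b \<in> Basis" using nonempty_Basis by blast
  then have "sphere (0::'a) 1 \<noteq> {}" by (auto simp: norm_Basis)
  then obtain v where "v \<in> sphere 0 1" "\<forall>w\<in>sphere 0 1. cmp_obj S v \<le> cmp_obj S w"
    using continuous_attains_inf[OF compact_sphere _ continuous_on_cmp_obj[OF assms]] by blast
  then show ?thesis by (auto simp: cmp_optimal_def)
qed

lemma cmp_optimal_norm_bound:
  assumes "finite S" "S \<noteq> {}" "cmp_optimal S v" "x \<in> qp_feasible S"
  shows "cmp_obj S v * norm x \<le> 1"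
proof (cases "x = 0")
  case False
  have "cmp_obj S v \<le> cmp_obj S (x /\<^sub>R norm x)"
    using assms(3) False by (simp add: cmp_optimal_def)
  also have "\<dots> = cmp_obj S x / norm x"
    using cmp_obj_scaleR[OF assms(1,2)] by (simp add: divide_inverse_commute)
  finally have "cmp_obj S v * norm x \<le> cmp_obj S x"
    using False by (simp add: pos_le_divide_eq)
  also have "\<dots> \<le> 1"
    using assms(4) qp_feasible_iff_cmp_obj[OF assms(1,2)] by blast
  finally show ?thesis .
qed simp

lemma cmp_optimal_imp_qp_optimal:
  fixes S :: "'a::euclidean_space set"
  assumes "finite S" "positive_spanning S" "cmp_optimal S v"
  shows "0 < cmp_obj S v \<and> qp_optimal S (v /\<^sub>R cmp_obj S v)"
proof -
  have S: "S \<noteq> {}" using positive_spanning_nonempty[OF assms(2)] .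
  have unit: "norm v = 1" using assms(3) by (simp add: cmp_optimal_def)
  then have pos: "0 < cmp_obj S v"
    using cmp_obj_pos[OF assms(1,2)] by (metis norm_zero zero_neq_one)
  have "cmp_obj S (v /\<^sub>R cmp_obj S v) = 1"
    using pos cmp_obj_scaleR[OF assms(1) S] by simp
  then have feasible: "v /\<^sub>R cmp_obj S v \<in> qp_feasible S"
    using qp_feasible_iff_cmp_obj[OF assms(1) S] by simp
  have "norm y \<le> norm (v /\<^sub>R cmp_obj S v)" if "y \<in> qp_feasible S" for y
    using cmp_optimal_norm_bound[OF assms(1) S assms(3) that] pos unit
    by (simp add: inverse_eq_divide le_divide_eq mult.commute)
  then show ?thesis
    using pos feasible by (simp add: qp_optimal_def power_mono)
qed

lemma qp_optimal_imp_cmp_optimal: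
  fixes S :: "'a::euclidean_space set"
  assumes "finite S" "positive_spanning S" "qp_optimal S x"
  shows "x \<noteq> 0 \<and> cmp_optimal S (x /\<^sub>R norm x) \<and> cmp_obj S (x /\<^sub>R norm x) = 1 / norm x"
proof -
  have S: "S \<noteq> {}" using positive_spanning_nonempty[OF assms(2)] .
  obtain v where v: "cmp_optimal S v" using cmp_optimal_exists[OF assms(1)] ..
  define m where "m = cmp_obj S v"
  have m: "0 < m" "qp_optimal S (v /\<^sub>R m)"
    using cmp_optimal_imp_qp_optimal[OF assms(1,2) v] by (simp_all add: m_def)
  have "(norm (v /\<^sub>R m))\<^sup>2 \<le> (norm x)\<^sup>2"
    using assms(3) m(2) unfolding qp_optimal_def by blast
  then have "norm (v /\<^sub>R m) \<le> norm x"
    using norm_ge_zero power2_le_imp_le by blast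
  then have "1 / m \<le> norm x"
    using v m(1) by (simp add: cmp_optimal_def divide_inverse)
  moreover have "m * norm x \<le> 1"
    using cmp_optimal_norm_bound[OF assms(1) S v] assms(3) by (simp add: m_def qp_optimal_def)
  ultimately have norm_x: "norm x = 1 / m" and x: "x \<noteq> 0"
    using m(1) by (auto simp: field_simps)
  have "cmp_obj S x \<le> 1"
    using assms(3) qp_feasible_iff_cmp_obj[OF assms(1) S] unfolding qp_optimal_def by blast
  then have "cmp_obj S x / norm x \<le> m"
    using norm_x m(1) by (simp add: divide_right_mono)
  moreover have "cmp_obj S (x /\<^sub>R norm x) = cmp_obj S x / norm x"
    using cmp_obj_scaleR[OF assms(1) S] by (simp add: divide_inverse_commute)
  moreover have minimal: "m \<le> cmp_obj S w" if "norm w = 1" for w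
    using v that by (simp add: cmp_optimal_def m_def)
  ultimately have "cmp_obj S (x /\<^sub>R norm x) = m"
    using x minimal[of "x /\<^sub>R norm x"] by (intro antisym) auto
  then show ?thesis
    using x norm_x m(1) minimal by (simp add: cmp_optimal_def)
qed

theorem theorem6:
  fixes S :: "'a::euclidean_space set"
  assumes "finite S"
    and "positive_spanning S"
    and "\<forall>d\<in>S. norm d = 1"
  shows "(\<forall>v. cmp_optimal S v \<longrightarrow>
            cmp_obj S v > 0 \<and> qp_optimal S (v /\<^sub>R cmp_obj S v))
       \<and> (\<forall>x. qp_optimal S x \<longrightarrow>
            x \<noteq> 0 \<and> cmp_optimal S (x /\<^sub>R norm x) \<and> cmp_obj S (x /\<^sub>R norm x) = 1 / norm x)
       \<and> (\<exists>v. cmp_optimal S v) \<and> (\<exists>x. qp_optimal S x)"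
proof -
  obtain v where "cmp_optimal S v" using cmp_optimal_exists[OF assms(1)] ..
  then show ?thesis
    using cmp_optimal_imp_qp_optimal[OF assms(1,2)] qp_optimal_imp_cmp_optimal[OF assms(1,2)]
    by blast
qed

end
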